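(* Fix a dataset $\mathbb D_N$ and a point $x\in\mathcal X$. If the GP-CBF-SOCP is feasible at $x$, then the symmetric matrix $$H(x|\mathbb D_N)=\begin{bmatrix}H_{11}&H_{1u}\\ H_{1u}^T&H_{uu}\end{bmatrix}$$ is not positive definite, where - $H_{11}=\beta^2\Sigma_{L_fB}-(\widehat{L_fB}+\gamma(B(x)))^2$, - $H_{1u}=\beta^2(\Sigma_{L_fB}^{1/2})^T\Sigma_{L_gB}^{1/2}-(\widehat{L_fB}+\gamma(B(x)))\widehat{L_gB}$, - $H_{uu}=\beta^2\Sigma_{L_gB}-\widehat{L_gB}^T\widehat{L_gB}$, with all quantities evaluated at $(x|\mathbb D_N)$.
   Context: Consider $\dot x=f(x)+g(x)u$ with $x\in\mathcal X\subset\mathbb R^n$ and $u\in\mathbb R^m$, where $f,g$ are locally Lipschitz and unknown. A nominal model $\tilde f,\tilde g$ is available. Let $B:\mathcal X\to\mathbb R$ be $C^1$, let $\gamma$ be extended class-$\mathcal K_\infty$, and let $u_{\text{ref}}$ be a reference controller. Lie derivatives: $L_{\tilde f}B=\nabla B\,\tilde f$ and $L_{\tilde g}B=\nabla B\,\tilde g\in\mathbb R^{1\times m}$; $L_fB$ and $L_gB$ are defined similarly. Set $\Delta_B(x,u)=(L_fB-L_{\tilde f}B)(x)+(L_gB-L_{\tilde g}B)(x)u$. A dataset $\mathbb D_N=\{((x_j,u_j),z_j)\}$ consists of $z_j=\Delta_B(x_j,u_j)+\epsilon_j$. GP model with the affine dot product kernel $k_c((x,y),(x',y'))=y^T\mathrm{diag}(k_1(x,x'),\dots,k_{m+1}(x,x'))y'$: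 - Let $y_j=[1,u_j^T]^T$, $\mathbf z=(z_j)$, let $\sigma_n>0$, and let $K_c$ be the Gram matrix on the data. - Let $K_{**}(x)=\mathrm{diag}(k_i(x,x))$, and let $K_{*Y}(x)$ have entries $k_i(x,x_j)(y_j)_i$. - Define $m_B(x|\mathbb D_N)=K_{*Y}(K_c+\sigma_n^2I)^{-1}\mathbf z$ and $\Sigma_B(x|\mathbb D_N)=K_{**}-K_{*Y}(K_c+\sigma_n^2I)^{-1}K_{*Y}^T$, which is positive definite. - The posterior mean and standard deviation are $\mu_B=m_B^T[1;u]$ and $\sigma_B=\sqrt{[1,u^T]\Sigma_B[1;u]}$. $\beta>0$ is a constant. Derived quantities: - $\widehat{L_fB}=L_{\tilde f}B+(m_B)_1$ and $\widehat{L_gB}=L_{\tilde g}B+((m_B)_2,\dots,(m_B)_{m+1})$. - $\Sigma_B^{1/2}$ is the symmetric positive definite square root of $\Sigma_B$. - $\Sigma_{L_fB}^{1/2}$ is its first column and $\Sigma_{L_gB}^{1/2}$ its remaining $m$ columns. - $\Sigma_{L_fB}=(\Sigma_{L_fB}^{1/2})^T\Sigma_{L_fB}^{1/2}\in\mathbb R$ and $\Sigma_{L_gB}=(\Sigma_{L_gB}^{1/2})^T\Sigma_{L_gB}^{1/2}\in\mathbb R^{m\times m}$. The GP-CBF-SOCP at $x$ is: minimize $\|u-u_{\text{ref}}(x)\|^2$ subject to $L_{\tilde f}B(x)+L_{\tilde g}B(x)u+\mu_B(x,u|\mathbb D_N)-\beta\sigma_B(x,u|\mathbb D_N)+\gamma(B(x))\ge0$.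 It is feasible at $x$ if some $u$ satisfies the constraint. *)

theory Defs
  imports "HOL-Analysis.Analysis"
begin

definition ext_class_K_inf :: "(real \<Rightarrow> real) \<Rightarrow> bool" where
  "ext_class_K_inf \<gamma> \<longleftrightarrow> continuous_on UNIV \<gamma> \<and> strict_mono \<gamma> \<and> \<gamma> 0 = 0 \<and>
     filterlim \<gamma> at_top at_top \<and> filterlim \<gamma> at_bot at_bot"

definition sym_mat :: "real^'k^'k \<Rightarrow> bool" where
  "sym_mat A \<longleftrightarrow> transpose A = A"

definition pos_def :: "real^'k^'k \<Rightarrow> bool" where
  "pos_def A \<longleftrightarrow> (\<forall>v. v \<noteq> 0 \<longrightarrow> v \<bullet> (A *v v) > 0)"

(* Indices of R^(m+1) are represented by the type unit + 'm:
   Inl () is the first (drift) coordinate, Inr j the coordinate of input j. *)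
definition yvec :: "real^'m \<Rightarrow> real^(unit + 'm)" where
  "yvec u = (\<chi> i. case i of Inl _ \<Rightarrow> 1 | Inr j \<Rightarrow> u $ j)"

definition LieF :: "(real^'n \<Rightarrow> real^'n) \<Rightarrow> (real^'n \<Rightarrow> real^'n) \<Rightarrow> real^'n \<Rightarrow> real" where
  "LieF gradB F x = gradB x \<bullet> F x"

definition LieG :: "(real^'n \<Rightarrow> real^'n) \<Rightarrow> (real^'n \<Rightarrow> real^'m^'n) \<Rightarrow> real^'n \<Rightarrow> real^'m" where
  "LieG gradB G x = gradB x v* G x"

definition DeltaB :: "(real^'n \<Rightarrow> real^'n) \<Rightarrow> (real^'n \<Rightarrow> real^'n) \<Rightarrow> (real^'n \<Rightarrow> real^'m^'n)
    \<Rightarrow> (real^'n \<Rightarrow> real^'n) \<Rightarrow> (real^'n \<Rightarrow> real^'m^'n) \<Rightarrow> real^'n \<Rightarrow> real^'m \<Rightarrow> real" where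
  "DeltaB gradB f g ft gt x u =
     (LieF gradB f x - LieF gradB ft x) + (LieG gradB g x - LieG gradB gt x) \<bullet> u"

(* GP with affine dot-product kernel; k i is the i-th base kernel, data indexed by 'd:
   xs j, us j, zs $ j. *)
definition Kc :: "((unit + 'm::finite) \<Rightarrow> real^'n \<Rightarrow> real^'n \<Rightarrow> real) \<Rightarrow> ('d::finite \<Rightarrow> real^'n)
     \<Rightarrow> ('d \<Rightarrow> real^'m) \<Rightarrow> real^'d^'d" where
  "Kc k xs us = (\<chi> j l. \<Sum>i\<in>UNIV. (yvec (us j)) $ i * k i (xs j) (xs l) * (yvec (us l)) $ i)"

definition KsY :: "((unit + 'm::finite) \<Rightarrow> real^'n \<Rightarrow> real^'n \<Rightarrow> real) \<Rightarrow> ('d::finite \<Rightarrow> real^'n)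
     \<Rightarrow> ('d \<Rightarrow> real^'m) \<Rightarrow> real^'n \<Rightarrow> real^'d^(unit + 'm)" where
  "KsY k xs us x = (\<chi> i j. k i x (xs j) * (yvec (us j)) $ i)"

definition Kss :: "((unit + 'm::finite) \<Rightarrow> real^'n \<Rightarrow> real^'n \<Rightarrow> real) \<Rightarrow> real^'n \<Rightarrow> real^(unit + 'm)^(unit + 'm)" where
  "Kss k x = (\<chi> i l. if i = l then k i x x else 0)"

definition mB :: "((unit + 'm::finite) \<Rightarrow> real^'n \<Rightarrow> real^'n \<Rightarrow> real) \<Rightarrow> ('d::finite \<Rightarrow> real^'n)
     \<Rightarrow> ('d \<Rightarrow> real^'m) \<Rightarrow> real^'d \<Rightarrow> real \<Rightarrow> real^'n \<Rightarrow> real^(unit + 'm)" where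
  "mB k xs us zs \<sigma>n x =
     KsY k xs us x *v (matrix_inv (Kc k xs us + (\<sigma>n\<^sup>2) *\<^sub>R mat 1) *v zs)"

definition SigmaB :: "((unit + 'm::finite) \<Rightarrow> real^'n \<Rightarrow> real^'n \<Rightarrow> real) \<Rightarrow> ('d::finite \<Rightarrow> real^'n)
     \<Rightarrow> ('d \<Rightarrow> real^'m) \<Rightarrow> real \<Rightarrow> real^'n \<Rightarrow> real^(unit + 'm)^(unit + 'm)" where
  "SigmaB k xs us \<sigma>n x =
     Kss k x - KsY k xs us x ** matrix_inv (Kc k xs us + (\<sigma>n\<^sup>2) *\<^sub>R mat 1) ** transpose (KsY k xs us x)"

definition muB where
  "muB k xs us zs \<sigma>n x u = mB k xs us zs \<sigma>n x \<bullet> yvec u"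

definition sigmaB where
  "sigmaB k xs us \<sigma>n x u = sqrt (yvec u \<bullet> (SigmaB k xs us \<sigma>n x *v yvec u))"

definition socp_feasible where
  "socp_feasible gradB ft gt B \<gamma> \<beta> k xs us zs \<sigma>n x \<longleftrightarrow>
     (\<exists>u. LieF gradB ft x + LieG gradB gt x \<bullet> u + muB k xs us zs \<sigma>n x u
            - \<beta> * sigmaB k xs us \<sigma>n x u + \<gamma> (B x) \<ge> 0)"

(* The matrix H(x|D_N), built from the estimates and the given square root S of Sigma_B *)
definition Hmat :: "(real^'n \<Rightarrow> real^'n) \<Rightarrow> (real^'n \<Rightarrow> real^'n) \<Rightarrow> (real^'n \<Rightarrow> real^'m^'n)
   \<Rightarrow> (real^'n \<Rightarrow> real) \<Rightarrow> (real \<Rightarrow> real) \<Rightarrow> real \<Rightarrow> real^(unit + 'm) \<Rightarrow> real^(unit + 'm)^(unit + 'm)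
   \<Rightarrow> real^'n \<Rightarrow> real^(unit + 'm)^(unit + 'm)" where
  "Hmat gradB ft gt B \<gamma> \<beta> m S x =
    (let LfBh = LieF gradB ft x + m $ Inl ();
         LgBh = LieG gradB gt x + (\<chi> j. m $ Inr j);
         Sf = column (Inl ()) S;
         Sg = (\<chi> r j. S $ r $ Inr j) :: real^'m^(unit + 'm);
         c = LfBh + \<gamma> (B x);
         H11 = \<beta>\<^sup>2 * (Sf \<bullet> Sf) - c\<^sup>2;
         H1u = \<beta>\<^sup>2 *\<^sub>R (Sf v* Sg) - c *\<^sub>R LgBh;
         Huu = \<beta>\<^sup>2 *\<^sub>R (transpose Sg ** Sg) - (\<chi> i j. LgBh $ i * LgBh $ j)
     in (\<chi> i l. case (i, l) of
           (Inl _, Inl _) \<Rightarrow> H11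
         | (Inl _, Inr j) \<Rightarrow> H1u $ j
         | (Inr i', Inl _) \<Rightarrow> H1u $ i'
         | (Inr i', Inr j) \<Rightarrow> Huu $ i' $ j))"

end

theory Submission
  imports Defs
begin

text \<open>Write \<open>y = [1; u]\<close> and \<open>a = [L\<^sub>fB + \<gamma>(B x); L\<^sub>gB]\<close> with the estimated
  Lie derivatives. Then \<open>H = \<beta>\<^sup>2 S\<^sup>T S - a a\<^sup>T\<close>, and a feasible input \<open>u\<close> of the SOCP
  satisfies \<open>\<beta> \<parallel>S y\<parallel> \<le> a \<bullet> y\<close>, because \<open>\<sigma>\<^sub>B = \<parallel>S y\<parallel>\<close> when \<open>S\<close> is a symmetric
  square root of \<open>\<Sigma>\<^sub>B\<close>. Squaring gives \<open>y\<^sup>T H y = \<beta>\<^sup>2 \<parallel>S y\<parallel>\<^sup>2 - (a \<bullet> y)\<^sup>2 \<le> 0\<close>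
  for the nonzero vector \<open>y\<close>.\<close>

definition outer_prod :: "real^'k \<Rightarrow> real^'l \<Rightarrow> real^'l^'k" where
  "outer_prod a b = (\<chi> i j. a $ i * b $ j)"

lemma inner_outer_prod_self:
  fixes a y :: "real^'k"
  shows "y \<bullet> (outer_prod a a *v y) = (a \<bullet> y)\<^sup>2"
  by (simp add: outer_prod_def inner_vec_def matrix_vector_mult_def power2_eq_square
      sum_distrib_left sum_distrib_right mult_ac)

lemma inner_transpose_mult_self:
  fixes S :: "real^'k^'l" and y :: "real^'k"
  shows "y \<bullet> ((transpose S ** S) *v y) = (norm (S *v y))\<^sup>2"
proof -
  have "y \<bullet> ((transpose S ** S) *v y) = (y v* transpose S) \<bullet> (S *v y)"
    by (simp only: dot_lmul_matrix matrix_vector_mul_assoc)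
  then show ?thesis
    by (simp add: power2_norm_eq_inner)
qed

lemma not_pos_def_gram_minus_outer_prod:
  fixes S :: "real^'k^'l" and a y :: "real^'k"
  assumes "\<beta> \<ge> 0" and "y \<noteq> 0" and "\<beta> * norm (S *v y) \<le> a \<bullet> y"
  shows "\<not> pos_def (\<beta>\<^sup>2 *\<^sub>R (transpose S ** S) - outer_prod a a)"
proof -
  have "0 \<le> \<beta> * norm (S *v y)"
    using assms(1) by simp
  then have "(\<beta> * norm (S *v y))\<^sup>2 \<le> (a \<bullet> y)\<^sup>2"
    by (intro power_mono assms(3))
  then have "y \<bullet> ((\<beta>\<^sup>2 *\<^sub>R (transpose S ** S) - outer_prod a a) *v y) \<le> 0"
    by (simp add: matrix_vector_mult_diff_rdistrib inner_diff_right
        flip: scaleR_matrix_vector_assoc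
        add: inner_transpose_mult_self inner_outer_prod_self power_mult_distrib)
  with assms(2) show ?thesis
    by (auto simp: pos_def_def not_less)
qed

lemma sum_UNIV_Plus:
  fixes f :: "'a::finite + 'b::finite \<Rightarrow> 'c::comm_monoid_add"
  shows "sum f UNIV = (\<Sum>i\<in>UNIV. f (Inl i)) + (\<Sum>j\<in>UNIV. f (Inr j))"
  by (simp flip: UNIV_Plus_UNIV add: sum.Plus comp_def)

lemma inner_yvec:
  fixes v :: "real^(unit + 'm::finite)"
  shows "v \<bullet> yvec u = v $ Inl () + (\<chi> j. v $ Inr j) \<bullet> u"
  by (simp add: yvec_def inner_vec_def sum_UNIV_Plus UNIV_unit)

lemma yvec_nonzero: "yvec u \<noteq> 0"
  by (metis old.sum.simps(5) vec_lambda_beta yvec_def zero_index zero_neq_one)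

definition cbf_coeff :: "(real^'n \<Rightarrow> real^'n) \<Rightarrow> (real^'n \<Rightarrow> real^'n) \<Rightarrow> (real^'n \<Rightarrow> real^'m^'n)
   \<Rightarrow> (real^'n \<Rightarrow> real) \<Rightarrow> (real \<Rightarrow> real) \<Rightarrow> real^(unit + 'm) \<Rightarrow> real^'n \<Rightarrow> real^(unit + 'm)" where
  "cbf_coeff gradB ft gt B \<gamma> m x =
     (\<chi> i. case i of Inl _ \<Rightarrow> LieF gradB ft x + \<gamma> (B x) | Inr j \<Rightarrow> LieG gradB gt x $ j) + m"

lemma inner_cbf_coeff_yvec:
  "cbf_coeff gradB ft gt B \<gamma> m x \<bullet> yvec u =
     LieF gradB ft x + LieG gradB gt x \<bullet> u + m \<bullet> yvec u + \<gamma> (B x)"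
  unfolding cbf_coeff_def inner_add_left by (simp add: inner_yvec)

lemma Hmat_eq_gram_minus_outer_prod:
  "Hmat gradB ft gt B \<gamma> \<beta> m S x =
     \<beta>\<^sup>2 *\<^sub>R (transpose S ** S) - outer_prod (cbf_coeff gradB ft gt B \<gamma> m x) (cbf_coeff gradB ft gt B \<gamma> m x)"
  unfolding Hmat_def Let_def cbf_coeff_def outer_prod_def
  by (auto simp: vec_eq_iff matrix_matrix_mult_def transpose_def column_def
      vector_matrix_mult_def inner_vec_def power2_eq_square algebra_simps split: sum.splits)

lemma sigmaB_eq_norm_sym_sqrt:
  assumes "sym_mat S" and "S ** S = SigmaB k xs us \<sigma>n x"
  shows "sigmaB k xs us \<sigma>n x u = norm (S *v yvec u)"
proof -
  have "SigmaB k xs us \<sigma>n x = transpose S ** S"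
    using assms by (simp add: sym_mat_def)
  then show ?thesis
    by (simp add: sigmaB_def inner_transpose_mult_self)
qed

theorem lemma8:
  fixes X :: "(real^'n) set"
    and f ft :: "real^'n \<Rightarrow> real^'n"
    and g gt :: "real^'n \<Rightarrow> real^'m^'n"
    and B :: "real^'n \<Rightarrow> real"
    and gradB :: "real^'n \<Rightarrow> real^'n"
    and \<gamma> :: "real \<Rightarrow> real"
    and \<beta> \<sigma>n :: real
    and k :: "(unit + 'm) \<Rightarrow> real^'n \<Rightarrow> real^'n \<Rightarrow> real"
    and xs :: "'d::finite \<Rightarrow> real^'n"
    and us :: "'d \<Rightarrow> real^'m"
    and zs eps :: "real^'d"
    and S :: "real^(unit + 'm)^(unit + 'm)"
    and x :: "real^'n"
  assumes B_C1: "\<forall>y\<in>X. (B has_derivative (\<lambda>h. gradB y \<bullet> h)) (at y within X)"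
      and gradB_cont: "continuous_on X gradB"
      and gamma: "ext_class_K_inf \<gamma>"
      and beta: "\<beta> > 0"
      and sigma_n: "\<sigma>n > 0"
      and data_X: "\<forall>j. xs j \<in> X"
      and data: "\<forall>j. zs $ j = DeltaB gradB f g ft gt (xs j) (us j) + eps $ j"
      and x_in: "x \<in> X"
      and Sigma_pd: "pos_def (SigmaB k xs us \<sigma>n x)"
      and S_sym: "sym_mat S"
      and S_pd: "pos_def S"
      and S_sqrt: "S ** S = SigmaB k xs us \<sigma>n x"
      and feas: "socp_feasible gradB ft gt B \<gamma> \<beta> k xs us zs \<sigma>n x"
  shows "\<not> pos_def (Hmat gradB ft gt B \<gamma> \<beta> (mB k xs us zs \<sigma>n x) S x)"
proof -
  define m where "m = mB k xs us zs \<sigma>n x"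
  define a where "a = cbf_coeff gradB ft gt B \<gamma> m x"
  obtain u where "LieF gradB ft x + LieG gradB gt x \<bullet> u + m \<bullet> yvec u
      - \<beta> * sigmaB k xs us \<sigma>n x u + \<gamma> (B x) \<ge> 0"
    using feas by (auto simp: socp_feasible_def muB_def m_def)
  then have "\<beta> * norm (S *v yvec u) \<le> a \<bullet> yvec u"
    using sigmaB_eq_norm_sym_sqrt[OF S_sym S_sqrt] by (simp add: a_def inner_cbf_coeff_yvec)
  then have "\<not> pos_def (\<beta>\<^sup>2 *\<^sub>R (transpose S ** S) - outer_prod a a)"
    using beta yvec_nonzero by (intro not_pos_def_gram_minus_outer_prod) auto
  then show ?thesis
    by (simp add: Hmat_eq_gram_minus_outer_prod a_def m_def)
qed

end
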